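(* Fix one of the following settings, with $\phi,\sigma$ commuting $\mathbb{C}$-linear automorphisms of $K$: (2S) $K=\mathbb{C}(x)$, $\phi(x)=x+h_1$, $\sigma(x)=x+h_2$, $h_1/h_2\notin\mathbb{Q}$; (2Q) $K=\bigcup_{j\ge1}\mathbb{C}(x^{1/j})$, $\phi(x)=q_1x$, $\sigma(x)=q_2x$, with $q_1,q_2\in\mathbb{C}^*$ multiplicatively independent and not both algebraic numbers of modulus one all of whose Galois conjugates have modulus one; (2M) $K=\bigcup_{j\ge1}\mathbb{C}(x^{1/j})$, $\phi(x)=x^{p_1}$, $\sigma(x)=x^{p_2}$, $p_1,p_2$ multiplicatively independent natural numbers. Let $\tilde a\in K^*$, $\tilde b\in K$, and assume that there exists a $\sigma$-Picard–Vessiot extension $L_A$ over $K$ for $\phi(Y)=AY$ with $A=\begin{pmatrix}\tilde a&\tilde b\\0&1\end{pmatrix}$ which is a field. Let $L$ be a field with $K\subset L\subset L_A$ and $\phi(L)\subset L$, and let $x\in L_A^*$ be such that $\phi(x)/x=\alpha\in L^*$. If the equation $\phi(y)=\tilde ay+\tilde b$ has a solution in $L(x)$, then it has a solution in $L$.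
   Context: For $A\in\mathrm{GL}_n(K)$, a $\sigma$-Picard–Vessiot extension for $\phi(Y)=AY$ over $K$ which is a field is a field extension $L_A$ of $K$ with commuting endomorphisms $\phi,\sigma$ extending those of $K$ such that there is $U\in\mathrm{GL}_n(L_A)$ with $\phi(U)=AU$, $L_A$ is generated as a field over $K$ by the entries of $\sigma^i(U)$, $i\ge0$, and $L_A^\phi=K^\phi=\mathbb{C}$. *)

theory Defs
  imports "HOL-Analysis.Analysis" "HOL-Computational_Algebra.Polynomial"
begin

definition field_endo :: "('a::field \<Rightarrow> 'a) \<Rightarrow> bool" where
  "field_endo f \<longleftrightarrow> f 1 = 1 \<and> (\<forall>a b. f (a + b) = f a + f b) \<and> (\<forall>a b. f (a * b) = f a * f b)"

definition complex_emb :: "(complex \<Rightarrow> 'a::field) \<Rightarrow> bool" where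
  "complex_emb e \<longleftrightarrow> e 1 = 1 \<and> (\<forall>a b. e (a + b) = e a + e b) \<and> (\<forall>a b. e (a * b) = e a * e b)"

definition subfield :: "'a::field set \<Rightarrow> bool" where
  "subfield F \<longleftrightarrow> 0 \<in> F \<and> 1 \<in> F \<and> (\<forall>a\<in>F. \<forall>b\<in>F. a + b \<in> F \<and> a * b \<in> F)
     \<and> (\<forall>a\<in>F. - a \<in> F \<and> inverse a \<in> F)"

definition field_gen :: "'a::field set \<Rightarrow> 'a set \<Rightarrow> 'a set" where
  "field_gen S T = \<Inter>{F. subfield F \<and> S \<union> T \<subseteq> F}"

definition transc :: "(complex \<Rightarrow> 'a::field) \<Rightarrow> 'a \<Rightarrow> bool" where
  "transc e t \<longleftrightarrow> (\<forall>p::complex poly. p \<noteq> 0 \<longrightarrow> poly (map_poly e p) t \<noteq> 0)"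

definition mult_indep :: "complex \<Rightarrow> complex \<Rightarrow> bool" where
  "mult_indep q1 q2 \<longleftrightarrow> (\<forall>m n :: int. q1 powi m * q2 powi n = 1 \<longrightarrow> m = 0 \<and> n = 0)"

(* c is a Galois conjugate of q over Q: a root of the minimal polynomial of q,
   i.e. a root of every rational polynomial vanishing at q *)
definition galois_conj :: "complex \<Rightarrow> complex \<Rightarrow> bool" where
  "galois_conj q c \<longleftrightarrow> (\<forall>p::complex poly. (\<forall>i. coeff p i \<in> \<rat>) \<longrightarrow> poly p q = 0 \<longrightarrow> poly p c = 0)"

definition unimod_alg :: "complex \<Rightarrow> bool" where
  "unimod_alg q \<longleftrightarrow> algebraic q \<and> cmod q = 1 \<and> (\<forall>c. galois_conj q c \<longrightarrow> cmod c = 1)"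

definition base_auts :: "(complex \<Rightarrow> 'a::field) \<Rightarrow> ('a \<Rightarrow> 'a) \<Rightarrow> ('a \<Rightarrow> 'a) \<Rightarrow> 'a set \<Rightarrow> bool" where
  "base_auts e \<phi> \<sigma> K \<longleftrightarrow> \<phi> ` K = K \<and> \<sigma> ` K = K \<and> (\<forall>c. \<phi> (e c) = e c \<and> \<sigma> (e c) = e c)
     \<and> (\<forall>y\<in>K. \<phi> (\<sigma> y) = \<sigma> (\<phi> y))"

definition setting_2S :: "(complex \<Rightarrow> 'a::field) \<Rightarrow> ('a \<Rightarrow> 'a) \<Rightarrow> ('a \<Rightarrow> 'a) \<Rightarrow> 'a set \<Rightarrow> bool" where
  "setting_2S e \<phi> \<sigma> K \<longleftrightarrow> (\<exists>t h1 h2. transc e t \<and> K = field_gen (range e) {t}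
     \<and> \<phi> t = t + e h1 \<and> \<sigma> t = t + e h2 \<and> h1 / h2 \<notin> \<rat>)"

(* K = union over j >= 1 of C(t^(1/j)): r j plays the role of t^(1/j),
   with compatible roots r(j*k)^k = r j and t = r 1 transcendental over C *)
definition puiseux_field :: "(complex \<Rightarrow> 'a::field) \<Rightarrow> (nat \<Rightarrow> 'a) \<Rightarrow> 'a set \<Rightarrow> bool" where
  "puiseux_field e r K \<longleftrightarrow> transc e (r 1) \<and> (\<forall>j\<ge>1. \<forall>k\<ge>1. r (j * k) ^ k = r j)
     \<and> K = field_gen (range e) (r ` {1..})"

definition setting_2Q :: "(complex \<Rightarrow> 'a::field) \<Rightarrow> ('a \<Rightarrow> 'a) \<Rightarrow> ('a \<Rightarrow> 'a) \<Rightarrow> 'a set \<Rightarrow> bool" where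
  "setting_2Q e \<phi> \<sigma> K \<longleftrightarrow> (\<exists>r q1 q2. puiseux_field e r K
     \<and> \<phi> (r 1) = e q1 * r 1 \<and> \<sigma> (r 1) = e q2 * r 1
     \<and> q1 \<noteq> 0 \<and> q2 \<noteq> 0 \<and> mult_indep q1 q2 \<and> \<not> (unimod_alg q1 \<and> unimod_alg q2))"

definition setting_2M :: "(complex \<Rightarrow> 'a::field) \<Rightarrow> ('a \<Rightarrow> 'a) \<Rightarrow> ('a \<Rightarrow> 'a) \<Rightarrow> 'a set \<Rightarrow> bool" where
  "setting_2M e \<phi> \<sigma> K \<longleftrightarrow> (\<exists>r (p1::nat) (p2::nat). puiseux_field e r K
     \<and> \<phi> (r 1) = r 1 ^ p1 \<and> \<sigma> (r 1) = r 1 ^ p2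
     \<and> mult_indep (of_nat p1) (of_nat p2))"

definition mat2 :: "'a::zero \<Rightarrow> 'a \<Rightarrow> 'a \<Rightarrow> 'a \<Rightarrow> 'a^2^2" where
  "mat2 a b c d = (\<chi> i j. if i = 1 then (if j = 1 then a else b) else (if j = 1 then c else d))"

definition map_mat :: "('a \<Rightarrow> 'a) \<Rightarrow> 'a^'n^'m \<Rightarrow> 'a^'n^'m" where
  "map_mat f M = (\<chi> i j. f (M $ i $ j))"

(* L_A (the type 'a, a field) is a sigma-Picard-Vessiot extension over K for phi(Y) = A Y *)
definition sigma_PV_field :: "(complex \<Rightarrow> 'a::field) \<Rightarrow> ('a \<Rightarrow> 'a) \<Rightarrow> ('a \<Rightarrow> 'a) \<Rightarrow> 'a set
     \<Rightarrow> 'a^'n^'n \<Rightarrow> bool" where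
  "sigma_PV_field e \<phi> \<sigma> K A \<longleftrightarrow> field_endo \<phi> \<and> field_endo \<sigma> \<and> \<phi> \<circ> \<sigma> = \<sigma> \<circ> \<phi>
     \<and> (\<exists>U::'a^'n^'n. invertible U \<and> map_mat \<phi> U = A ** U
          \<and> UNIV = field_gen K {(\<sigma> ^^ i) (U $ k $ l) | i k l. True})
     \<and> {y. \<phi> y = y} = range e"

end

theory Submission
  imports Defs "HOL-Computational_Algebra.Polynomial_FPS"
begin

text \<open>
  Then \<open>\<phi>\<close> acts on \<open>L[w]\<close> through the twist
  \<open>\<Sum> c\<^sub>i X\<^sup>i \<mapsto> \<Sum> \<phi>(c\<^sub>i) \<alpha>\<^sup>i X\<^sup>i\<close> of \<open>L[X]\<close>,
  which on constant coefficients is just \<open>\<phi>\<close>.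

  If \<open>w\<close> is algebraic over \<open>L\<close> with minimal polynomial \<open>m\<close>, then \<open>L(w) = L[w]\<close>, so a
  solution is \<open>y = r(w)\<close> with \<open>deg r < deg m\<close>. The polynomial \<open>\<phi>(r) - a r - b\<close> has
  degree \<open>< deg m\<close> and vanishes at \<open>w\<close>, hence is zero, and its constant coefficient shows
  that \<open>r(0) \<in> L\<close> is a solution.

  If \<open>w\<close> is transcendental, a solution \<open>P(w)/Q(w)\<close> gives the identity
  \<open>\<phi>(P) Q = (a P + b Q) \<phi>(Q)\<close> in \<open>L[X]\<close>. Expanding \<open>P/Q\<close> as a Laurent series in \<open>X\<close>
  over \<open>L\<close>, the same identity holds there, and comparing constant terms shows that the
  constant term of \<open>P/Q\<close> is a solution in \<open>L\<close>.
\<close>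

lemma
  assumes "subfield L"
  shows subfield_0: "0 \<in> L" and subfield_1: "1 \<in> L"
    and subfield_add: "a \<in> L \<Longrightarrow> b \<in> L \<Longrightarrow> a + b \<in> L"
    and subfield_mult: "a \<in> L \<Longrightarrow> b \<in> L \<Longrightarrow> a * b \<in> L"
    and subfield_uminus: "a \<in> L \<Longrightarrow> - a \<in> L"
    and subfield_inverse: "a \<in> L \<Longrightarrow> inverse a \<in> L"
  using assms unfolding subfield_def by blast+

lemma subfield_diff: "subfield L \<Longrightarrow> a \<in> L \<Longrightarrow> b \<in> L \<Longrightarrow> a - b \<in> L"
  by (metis diff_conv_add_uminus subfield_add subfield_uminus)

lemma subfield_divide: "subfield L \<Longrightarrow> a \<in> L \<Longrightarrow> b \<in> L \<Longrightarrow> a / b \<in> L"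
  by (metis divide_inverse subfield_inverse subfield_mult)

lemma subfield_power: "subfield L \<Longrightarrow> a \<in> L \<Longrightarrow> a ^ n \<in> L"
  by (induction n) (auto intro: subfield_1 subfield_mult)

lemma subfield_sum: "subfield L \<Longrightarrow> (\<And>x. x \<in> A \<Longrightarrow> g x \<in> L) \<Longrightarrow> sum g A \<in> L"
  by (induction A rule: infinite_finite_induct) (auto intro: subfield_0 subfield_add)

lemma
  assumes "field_endo f"
  shows field_endo_1: "f 1 = 1"
    and field_endo_add: "f (x + y) = f x + f y"
    and field_endo_mult: "f (x * y) = f x * f y"
  using assms unfolding field_endo_def by blast+

lemma field_endo_0: "field_endo f \<Longrightarrow> f 0 = 0"
  using field_endo_add[of f 0 0] by (metis add.right_neutral add_left_cancel)

lemma field_endo_inverse: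
  assumes "field_endo f"
  shows "f (inverse x) = inverse (f x)"
proof (cases "x = 0")
  case True
  then show ?thesis using assms by (simp add: field_endo_0)
next
  case False
  then have "f x * f (inverse x) = 1"
    using assms by (simp add: field_endo_1 flip: field_endo_mult)
  then show ?thesis by (rule inverse_unique[symmetric])
qed

lemma field_endo_eq_0_iff: "field_endo f \<Longrightarrow> f x = 0 \<longleftrightarrow> x = 0"
  by (metis field_endo_0 field_endo_1 field_endo_mult mult_zero_left right_inverse zero_neq_one)

lemma field_endo_divide: "field_endo f \<Longrightarrow> f (x / y) = f x / f y"
  by (simp add: divide_inverse field_endo_mult field_endo_inverse)

lemma field_endo_sum: "field_endo f \<Longrightarrow> f (sum g A) = (\<Sum>x\<in>A. f (g x))"
  by (induction A rule: infinite_finite_induct) (simp_all add: field_endo_0 field_endo_add)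

lemma field_endo_poly: "field_endo f \<Longrightarrow> f (poly p x) = poly (map_poly f p) (f x)"
  by (induction p) (simp_all add: map_poly_pCons field_endo_0 field_endo_add field_endo_mult)

definition poly_over :: "'a::field set \<Rightarrow> 'a poly \<Rightarrow> bool" where
  "poly_over L p \<longleftrightarrow> (\<forall>i. coeff p i \<in> L)"

lemma poly_over_0: "subfield L \<Longrightarrow> poly_over L 0"
  by (simp add: poly_over_def subfield_0)

lemma poly_over_const: "subfield L \<Longrightarrow> c \<in> L \<Longrightarrow> poly_over L [:c:]"
  by (simp add: poly_over_def coeff_pCons subfield_0 split: nat.split)

lemma poly_over_1: "subfield L \<Longrightarrow> poly_over L 1"
  by (metis one_pCons poly_over_const subfield_1)

lemma poly_over_X: "subfield L \<Longrightarrow> poly_over L [:0, 1:]"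
  by (simp add: poly_over_def coeff_pCons subfield_0 subfield_1 split: nat.split)

lemma poly_over_monom: "subfield L \<Longrightarrow> c \<in> L \<Longrightarrow> poly_over L (monom c n)"
  by (simp add: poly_over_def coeff_monom subfield_0)

lemma poly_over_add: "subfield L \<Longrightarrow> poly_over L p \<Longrightarrow> poly_over L q \<Longrightarrow> poly_over L (p + q)"
  by (simp add: poly_over_def subfield_add)

lemma poly_over_uminus: "subfield L \<Longrightarrow> poly_over L p \<Longrightarrow> poly_over L (- p)"
  by (simp add: poly_over_def subfield_uminus)

lemma poly_over_diff: "subfield L \<Longrightarrow> poly_over L p \<Longrightarrow> poly_over L q \<Longrightarrow> poly_over L (p - q)"
  by (simp add: poly_over_def subfield_diff)

lemma poly_over_smult: "subfield L \<Longrightarrow> c \<in> L \<Longrightarrow> poly_over L p \<Longrightarrow> poly_over L (smult c p)"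
  by (simp add: poly_over_def subfield_mult)

lemma poly_over_mult: "subfield L \<Longrightarrow> poly_over L p \<Longrightarrow> poly_over L q \<Longrightarrow> poly_over L (p * q)"
  unfolding poly_over_def coeff_mult by (auto intro!: subfield_sum subfield_mult)

lemma poly_over_div_mod:
  assumes L: "subfield L" and "poly_over L A" and B: "poly_over L B"
  shows "poly_over L (A div B) \<and> poly_over L (A mod B)"
  using \<open>poly_over L A\<close>
proof (induction "degree A" arbitrary: A rule: less_induct)
  case less
  show ?case
  proof (cases "B = 0 \<or> degree A < degree B")
    case True
    then show ?thesis
      using less.prems by (auto simp: div_poly_less mod_poly_less poly_over_0[OF L])
  next
    case False
    then have "B \<noteq> 0" and deg_le: "degree B \<le> degree A" by auto
    define M where "M = monom (lead_coeff A / lead_coeff B) (degree A - degree B)"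
    define A' where "A' = A - M * B"
    have M: "poly_over L M"
      unfolding M_def using less.prems B
      by (intro poly_over_monom L subfield_divide) (auto simp: poly_over_def)
    have "degree (M * B) \<le> degree A"
      using degree_mult_le[of M B] deg_le
        degree_monom_le[of "lead_coeff A / lead_coeff B" "degree A - degree B"]
      unfolding M_def by linarith
    moreover have "coeff (M * B) (degree A) = lead_coeff A"
      unfolding M_def coeff_monom_mult using deg_le \<open>B \<noteq> 0\<close> by simp
    ultimately have "A' = 0 \<or> degree A' < degree A"
      unfolding A'_def
      by (metis cancel_comm_monoid_add_class.diff_cancel degree_diff_le le_antisym
          leading_coeff_0_iff linorder_not_le order.refl coeff_diff)
    moreover have "poly_over L A'"
      unfolding A'_def by (intro poly_over_diff poly_over_mult L less.prems M B)
    ultimately have IH: "poly_over L (A' div B) \<and> poly_over L (A' mod B)"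
      using less.hyps poly_over_0[OF L] by fastforce
    have "A = A' + M * B" unfolding A'_def by simp
    then have "A div B = M + A' div B" and "A mod B = A' mod B"
      using \<open>B \<noteq> 0\<close> by simp_all
    then show ?thesis using IH M by (simp add: poly_over_add L)
  qed
qed

definition rat_fun_values :: "'a::field set \<Rightarrow> 'a \<Rightarrow> 'a set" where
  "rat_fun_values L w =
     {poly P w / poly Q w | P Q. poly_over L P \<and> poly_over L Q \<and> poly Q w \<noteq> 0}"

lemma rat_fun_valuesI:
  "poly_over L P \<Longrightarrow> poly_over L Q \<Longrightarrow> poly Q w \<noteq> 0
    \<Longrightarrow> poly P w / poly Q w \<in> rat_fun_values L w"
  unfolding rat_fun_values_def by blast

lemma subfield_rat_fun_values:
  assumes L: "subfield L"
  shows "subfield (rat_fun_values L w)"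
  unfolding subfield_def
proof (intro conjI ballI)
  show "0 \<in> rat_fun_values L w" "1 \<in> rat_fun_values L w"
    using rat_fun_valuesI[of L 0 1 w] rat_fun_valuesI[of L 1 1 w]
    by (simp_all add: poly_over_0 poly_over_1 L)
next
  fix x y assume "x \<in> rat_fun_values L w" "y \<in> rat_fun_values L w"
  then obtain P Q P' Q' where
    x: "poly_over L P" "poly_over L Q" "poly Q w \<noteq> 0" "x = poly P w / poly Q w" and
    y: "poly_over L P'" "poly_over L Q'" "poly Q' w \<noteq> 0" "y = poly P' w / poly Q' w"
    unfolding rat_fun_values_def by blast
  have "poly (P * Q' + P' * Q) w / poly (Q * Q') w \<in> rat_fun_values L w"
    and "poly (P * P') w / poly (Q * Q') w \<in> rat_fun_values L w"
    using x y by (intro rat_fun_valuesI poly_over_add poly_over_mult L; simp)+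
  moreover have "x + y = poly (P * Q' + P' * Q) w / poly (Q * Q') w"
    using x(3) y(3) unfolding x(4) y(4) by (simp add: field_simps)
  moreover have "x * y = poly (P * P') w / poly (Q * Q') w"
    unfolding x(4) y(4) by simp
  ultimately show "x + y \<in> rat_fun_values L w" "x * y \<in> rat_fun_values L w"
    by simp_all
next
  fix x assume "x \<in> rat_fun_values L w"
  then obtain P Q where
    x: "poly_over L P" "poly_over L Q" "poly Q w \<noteq> 0" "x = poly P w / poly Q w"
    unfolding rat_fun_values_def by blast
  have "poly (- P) w / poly Q w \<in> rat_fun_values L w"
    using x by (intro rat_fun_valuesI poly_over_uminus L)
  then show "- x \<in> rat_fun_values L w" unfolding x(4) by simp
  show "inverse x \<in> rat_fun_values L w"
  proof (cases "poly P w = 0")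
    case True
    then show ?thesis
      using rat_fun_valuesI[of L 0 1 w] x(4) by (simp add: poly_over_0 poly_over_1 L)
  next
    case False
    then have "inverse x = poly Q w / poly P w" unfolding x(4) by simp
    then show ?thesis using x False by (auto intro!: rat_fun_valuesI)
  qed
qed

lemma field_gen_singleton_subset_rat_fun_values:
  assumes L: "subfield L"
  shows "field_gen L {w} \<subseteq> rat_fun_values L w"
proof -
  have "c \<in> rat_fun_values L w" if "c \<in> L" for c
    using rat_fun_valuesI[of L "[:c:]" 1 w] that by (simp add: poly_over_const poly_over_1 L)
  moreover have "w \<in> rat_fun_values L w"
    using rat_fun_valuesI[of L "[:0, 1:]" 1 w] by (simp add: poly_over_X poly_over_1 L)
  ultimately show ?thesis
    using subfield_rat_fun_values[OF L] unfolding field_gen_def by blast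
qed

definition twist_poly :: "('a::field \<Rightarrow> 'a) \<Rightarrow> 'a \<Rightarrow> 'a poly \<Rightarrow> 'a poly" where
  "twist_poly f \<alpha> p = pcompose (map_poly f p) [:0, \<alpha>:]"

lemma coeff_twist_poly: "field_endo f \<Longrightarrow> coeff (twist_poly f \<alpha> p) n = \<alpha> ^ n * f (coeff p n)"
  by (simp add: twist_poly_def coeff_pcompose_linear coeff_map_poly field_endo_0)

lemma degree_twist_poly_le: "field_endo f \<Longrightarrow> degree (twist_poly f \<alpha> p) \<le> degree p"
  by (rule degree_le) (simp add: coeff_twist_poly coeff_eq_0 field_endo_0)

lemma poly_twist_poly:
  "field_endo f \<Longrightarrow> f w = \<alpha> * w \<Longrightarrow> poly (twist_poly f \<alpha> p) w = f (poly p w)"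
  by (simp add: twist_poly_def poly_pcompose field_endo_poly mult.commute)

lemma poly_over_twist_poly:
  "subfield L \<Longrightarrow> field_endo f \<Longrightarrow> f ` L \<subseteq> L \<Longrightarrow> \<alpha> \<in> L \<Longrightarrow> poly_over L p
    \<Longrightarrow> poly_over L (twist_poly f \<alpha> p)"
  unfolding poly_over_def by (auto simp: coeff_twist_poly intro!: subfield_mult subfield_power)

lemma poly_eq_coeff_0_if_degree_0: "degree p = 0 \<Longrightarrow> poly p x = coeff p 0"
  by (metis degree_0_id mult_zero_right poly_0 poly_pCons add.right_neutral)

definition algebraic_over :: "'a::field set \<Rightarrow> 'a \<Rightarrow> bool" where
  "algebraic_over L w \<longleftrightarrow> (\<exists>p. poly_over L p \<and> p \<noteq> 0 \<and> poly p w = 0)"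

locale minimal_polynomial =
  fixes L :: "'a::field set" and w :: 'a and m :: "'a poly"
  assumes subfield: "subfield L"
    and over: "poly_over L m" and nonzero: "m \<noteq> 0" and root: "poly m w = 0"
    and minimal: "\<And>p. poly_over L p \<Longrightarrow> poly p w = 0 \<Longrightarrow> degree p < degree m \<Longrightarrow> p = 0"

lemma algebraic_over_imp_minimal_polynomial:
  assumes "subfield L" and "algebraic_over L w"
  obtains m where "minimal_polynomial L w m"
proof -
  obtain m where m: "poly_over L m" "m \<noteq> 0" "poly m w = 0"
    and least: "\<And>p. poly_over L p \<and> p \<noteq> 0 \<and> poly p w = 0 \<Longrightarrow> degree m \<le> degree p"
    using assms(2) ex_has_least_nat[of "\<lambda>p. poly_over L p \<and> p \<noteq> 0 \<and> poly p w = 0" _ degree]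
    unfolding algebraic_over_def by blast
  have "minimal_polynomial L w m"
    by unfold_locales (use assms(1) m least in \<open>fastforce+\<close>)
  then show thesis by (rule that)
qed

context minimal_polynomial
begin

lemma degree_pos: "degree m > 0"
  using nonzero root by (metis gr0I degree_0_id pCons_0_0 poly_eq_coeff_0_if_degree_0)

lemma reduced_eval:
  assumes "poly_over L A"
  obtains r where "poly_over L r" "degree r < degree m" "poly r w = poly A w"
proof
  show "poly_over L (A mod m)" using poly_over_div_mod[OF subfield assms over] by simp
  show "degree (A mod m) < degree m" using degree_mod_less[OF nonzero, of A] degree_pos by auto
  show "poly (A mod m) w = poly A w" using root by (rule poly_mod)
qed

lemma eval_inverse_of_reduced:
  "poly_over L R \<Longrightarrow> degree R < degree m \<Longrightarrow> poly R w \<noteq> 0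
    \<Longrightarrow> \<exists>S. poly_over L S \<and> poly R w * poly S w = 1"
proof (induction "degree R" arbitrary: R rule: less_induct)
  case less
  show ?case
  proof (cases "degree R = 0")
    case True
    then have "poly R w = coeff R 0" by (rule poly_eq_coeff_0_if_degree_0)
    moreover have "poly_over L [:inverse (coeff R 0):]"
      using less.prems(1)
      by (intro poly_over_const subfield subfield_inverse) (simp add: poly_over_def)
    ultimately show ?thesis using less.prems(3) by force
  next
    case False
    have "R \<noteq> 0" using less.prems(3) by auto
    define q s where "q = m div R" and "s = m mod R"
    have q: "poly_over L q" and s: "poly_over L s"
      using poly_over_div_mod[OF subfield over less.prems(1)] unfolding q_def s_def by simp_all
    have "poly q w * poly R w + poly s w = 0"
      using root div_mult_mod_eq[of m R] unfolding q_def s_def by (metis poly_add poly_mult)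
    then have s_eval: "poly s w = - (poly q w * poly R w)"
      by (simp add: eq_neg_iff_add_eq_0 add.commute)
    have "s \<noteq> 0"
    proof
      assume "s = 0"
      then have "m = q * R" using div_mult_mod_eq[of m R] unfolding q_def s_def by simp
      then have "q \<noteq> 0" and "degree q < degree m"
        using nonzero False \<open>R \<noteq> 0\<close> by (auto simp: degree_mult_eq)
      moreover have "poly q w = 0" using s_eval \<open>s = 0\<close> less.prems(3) by simp
      ultimately show False using minimal q by blast
    qed
    then have "degree s < degree R"
      using degree_mod_less'[OF \<open>R \<noteq> 0\<close>] unfolding s_def by blast
    moreover have "poly s w \<noteq> 0"
      using minimal[OF s] \<open>s \<noteq> 0\<close> \<open>degree s < degree R\<close> less.prems(2) by auto
    ultimately obtain S where S: "poly_over L S" "poly s w * poly S w = 1"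
      using less.hyps[OF _ s] less.prems(2) by fastforce
    have "poly_over L (- (q * S))" by (intro poly_over_uminus poly_over_mult subfield q S(1))
    moreover have "poly R w * poly (- (q * S)) w = 1"
      using S(2) unfolding s_eval by (simp add: mult_ac)
    ultimately show ?thesis by blast
  qed
qed

lemma eval_inverse:
  assumes "poly_over L R" and "poly R w \<noteq> 0"
  obtains S where "poly_over L S" "poly R w * poly S w = 1"
proof -
  obtain R' where "poly_over L R'" "degree R' < degree m" "poly R' w = poly R w"
    using reduced_eval[OF assms(1)] .
  then show thesis using eval_inverse_of_reduced assms(2) that by metis
qed

lemma field_gen_singleton_reduced:
  assumes "y \<in> field_gen L {w}"
  obtains r where "poly_over L r" "degree r < degree m" "y = poly r w"
proof -
  obtain P Q where P: "poly_over L P" and Q: "poly_over L Q" "poly Q w \<noteq> 0"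
    and y: "y = poly P w / poly Q w"
    using field_gen_singleton_subset_rat_fun_values[OF subfield] assms
    unfolding rat_fun_values_def by blast
  obtain S where S: "poly_over L S" "poly Q w * poly S w = 1"
    using eval_inverse[OF Q] .
  then have "y = poly (P * S) w"
    unfolding y by (simp add: divide_inverse inverse_unique)
  then show thesis
    using reduced_eval[OF poly_over_mult[OF subfield P S(1)]] that by metis
qed

lemma solution_in_subfield:
  assumes f: "field_endo f" "f ` L \<subseteq> L" and \<alpha>: "\<alpha> \<in> L" "f w = \<alpha> * w"
    and ab: "a \<in> L" "b \<in> L"
    and y: "y \<in> field_gen L {w}" "f y = a * y + b"
  shows "\<exists>c\<in>L. f c = a * c + b"
proof -
  obtain r where r: "poly_over L r" "degree r < degree m" "y = poly r w"
    using field_gen_singleton_reduced[OF y(1)] .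
  define D where "D = twist_poly f \<alpha> r - smult a r - [:b:]"
  have "poly_over L D"
    unfolding D_def
    by (intro poly_over_diff poly_over_smult poly_over_const poly_over_twist_poly subfield f \<alpha> ab r)
  moreover have "poly D w = 0"
    unfolding D_def using y(2) by (simp add: poly_twist_poly[OF f(1) \<alpha>(2)] r(3))
  moreover have "degree D < degree m"
    unfolding D_def
    using degree_twist_poly_le[OF f(1), of \<alpha> r] degree_smult_le[of a r] r(2) degree_pos
    by (intro degree_diff_less) auto
  ultimately have "D = 0" by (rule minimal)
  then have "coeff D 0 = 0" by simp
  then have "f (coeff r 0) = a * coeff r 0 + b"
    unfolding D_def by (simp add: coeff_twist_poly[OF f(1)] algebra_simps)
  moreover have "coeff r 0 \<in> L" using r(1) unfolding poly_over_def by simp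
  ultimately show ?thesis by blast
qed

end

definition twist_fps :: "('a::field \<Rightarrow> 'a) \<Rightarrow> 'a \<Rightarrow> 'a fps \<Rightarrow> 'a fps" where
  "twist_fps f \<alpha> F = Abs_fps (\<lambda>n. \<alpha> ^ n * f (fps_nth F n))"

lemma twist_fps_nth [simp]: "fps_nth (twist_fps f \<alpha> F) n = \<alpha> ^ n * f (fps_nth F n)"
  by (simp add: twist_fps_def)

lemma twist_fps_mult:
  assumes f: "field_endo f"
  shows "twist_fps f \<alpha> (F * G) = twist_fps f \<alpha> F * twist_fps f \<alpha> G"
proof (rule fps_ext)
  fix n
  have "fps_nth (twist_fps f \<alpha> (F * G)) n
      = (\<Sum>i=0..n. \<alpha> ^ n * (f (fps_nth F i) * f (fps_nth G (n - i))))"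
    by (simp add: fps_mult_nth field_endo_sum field_endo_mult f sum_distrib_left)
  also have "\<dots>
      = (\<Sum>i=0..n. (\<alpha> ^ i * f (fps_nth F i)) * (\<alpha> ^ (n - i) * f (fps_nth G (n - i))))"
    by (intro sum.cong) (simp_all add: mult_ac flip: power_add)
  also have "\<dots> = fps_nth (twist_fps f \<alpha> F * twist_fps f \<alpha> G) n"
    by (simp add: fps_mult_nth)
  finally show "fps_nth (twist_fps f \<alpha> (F * G)) n
      = fps_nth (twist_fps f \<alpha> F * twist_fps f \<alpha> G) n" .
qed

lemma twist_fps_X_power:
  "field_endo f \<Longrightarrow> twist_fps f \<alpha> (fps_X ^ k) = fps_const (\<alpha> ^ k) * fps_X ^ k"
  by (rule fps_ext) (simp add: field_endo_0 field_endo_1)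

lemma fps_of_poly_twist_poly:
  "field_endo f \<Longrightarrow> fps_of_poly (twist_poly f \<alpha> p) = twist_fps f \<alpha> (fps_of_poly p)"
  by (rule fps_ext) (simp add: coeff_twist_poly)

lemma fps_nth_quotient_in_subfield:
  assumes L: "subfield L" and P: "\<And>n. fps_nth P n \<in> L"
    and Q: "\<And>n. fps_nth Q n \<in> L" "fps_nth Q 0 \<noteq> 0" and Z: "Z * Q = P"
  shows "fps_nth Z n \<in> L"
proof (induction n rule: less_induct)
  case (less n)
  have "fps_nth P n = (\<Sum>i=0..<n. fps_nth Z i * fps_nth Q (n - i)) + fps_nth Z n * fps_nth Q 0"
    by (simp add: fps_mult_nth flip: Z atLeastLessThanSuc_atLeastAtMost)
  then have "fps_nth Z n
      = (fps_nth P n - (\<Sum>i=0..<n. fps_nth Z i * fps_nth Q (n - i))) / fps_nth Q 0"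
    using Q(2) by (simp add: field_simps)
  also have "\<dots> \<in> L"
    using less.IH by (intro subfield_divide subfield_diff subfield_sum subfield_mult L P Q) auto
  finally show ?case .
qed

lemma solution_from_twisted_fraction:
  assumes f: "field_endo f" and L: "subfield L" and "\<alpha> \<noteq> 0"
    and P: "poly_over L P" and Q: "poly_over L Q" "Q \<noteq> 0"
    and eq: "twist_poly f \<alpha> P * Q = (smult a P + smult b Q) * twist_poly f \<alpha> Q"
  shows "\<exists>c\<in>L. f c = a * c + b"
proof -
  define k where "k = subdegree (fps_of_poly Q)"
  define Q1 where "Q1 = fps_shift k (fps_of_poly Q)"
  have Q_eq: "fps_of_poly Q = Q1 * fps_X ^ k"
    unfolding Q1_def k_def by (simp add: fps_shift_times_fps_X_power)
  have "fps_of_poly Q \<noteq> 0" using Q(2) fps_of_poly_eq_iff[of Q 0] by simp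
  then have Q1_0: "fps_nth Q1 0 \<noteq> 0"
    unfolding Q1_def k_def by (simp del: fps_of_poly_nth)
  \<comment> \<open>Z is the power series expansion of X^k P/Q, so its k-th coefficient is the constant
    term of the Laurent expansion of P/Q, on which the twist acts as f.\<close>
  define Z where "Z = fps_of_poly P * inverse Q1"
  have Z: "Z * Q1 = fps_of_poly P"
    unfolding Z_def using Q1_0 by (simp add: mult.assoc inverse_mult_eq_1)
  define C where "C = twist_fps f \<alpha> Q1 * Q1 * fps_X ^ k"
  have "fps_nth (twist_fps f \<alpha> Q1) 0 \<noteq> 0"
    using Q1_0 by (simp add: field_endo_eq_0_iff[OF f])
  then have "C \<noteq> 0"
    using Q1_0 unfolding C_def
    by (metis fps_zero_nth mult_eq_0_iff fps_X_neq_zero power_eq_0_iff)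
  have "twist_fps f \<alpha> (fps_of_poly P) * fps_of_poly Q
      = (fps_const a * fps_of_poly P + fps_const b * fps_of_poly Q)
          * twist_fps f \<alpha> (fps_of_poly Q)"
    using arg_cong[OF eq, of fps_of_poly]
    by (simp add: fps_of_poly_mult fps_of_poly_add fps_of_poly_smult
        fps_of_poly_twist_poly[OF f])
  then have "twist_fps f \<alpha> Z * C
      = fps_const (\<alpha> ^ k) * (fps_const a * Z + fps_const b * fps_X ^ k) * C"
    unfolding C_def Q_eq Z[symmetric]
    by (simp add: twist_fps_mult[OF f] twist_fps_X_power[OF f] algebra_simps)
  then have "twist_fps f \<alpha> Z = fps_const (\<alpha> ^ k) * (fps_const a * Z + fps_const b * fps_X ^ k)"
    using \<open>C \<noteq> 0\<close> by simp
  then have "\<alpha> ^ k * f (fps_nth Z k) = \<alpha> ^ k * (a * fps_nth Z k + b)"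
    by (metis twist_fps_nth fps_mult_left_const_nth fps_add_nth fps_X_power_nth mult.right_neutral)
  then have "f (fps_nth Z k) = a * fps_nth Z k + b"
    using \<open>\<alpha> \<noteq> 0\<close> by simp
  moreover have "fps_nth Z k \<in> L"
    using fps_nth_quotient_in_subfield[OF L _ _ Q1_0 Z] P Q(1)
    unfolding Q1_def poly_over_def by simp
  ultimately show ?thesis by blast
qed

lemma solution_in_subfield_if_transcendental:
  assumes f: "field_endo f" "f ` L \<subseteq> L" and L: "subfield L"
    and \<alpha>: "\<alpha> \<in> L" "\<alpha> \<noteq> 0" "f w = \<alpha> * w" and ab: "a \<in> L" "b \<in> L"
    and transc: "\<not> algebraic_over L w"
    and y: "y \<in> field_gen L {w}" "f y = a * y + b"
  shows "\<exists>c\<in>L. f c = a * c + b"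
proof -
  obtain P Q where P: "poly_over L P" and Q: "poly_over L Q" "poly Q w \<noteq> 0"
    and y_eq: "y = poly P w / poly Q w"
    using field_gen_singleton_subset_rat_fun_values[OF L] y(1)
    unfolding rat_fun_values_def by blast
  define D where "D = twist_poly f \<alpha> P * Q - (smult a P + smult b Q) * twist_poly f \<alpha> Q"
  have "poly (twist_poly f \<alpha> Q) w \<noteq> 0"
    using Q(2) by (simp add: poly_twist_poly[OF f(1) \<alpha>(3)] field_endo_eq_0_iff[OF f(1)])
  then have "poly D w = 0"
    using y Q(2) unfolding D_def y_eq
    by (simp add: poly_twist_poly[OF f(1) \<alpha>(3)] field_endo_divide[OF f(1)] field_simps)
  moreover have "poly_over L D"
    unfolding D_def by (intro poly_over_diff poly_over_mult poly_over_add poly_over_smult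
        poly_over_twist_poly L f \<alpha>(1) ab P Q(1))
  ultimately have "D = 0"
    using transc unfolding algebraic_over_def by blast
  moreover have "Q \<noteq> 0" using Q(2) by auto
  ultimately show ?thesis
    using solution_from_twisted_fraction[OF f(1) L \<alpha>(2) P Q(1)] unfolding D_def by simp
qed

lemma solution_in_subfield_of_simple_extension:
  assumes f: "field_endo f" "f ` L \<subseteq> L" and L: "subfield L"
    and \<alpha>: "\<alpha> \<in> L" "\<alpha> \<noteq> 0" "f w = \<alpha> * w" and ab: "a \<in> L" "b \<in> L"
    and y: "y \<in> field_gen L {w}" "f y = a * y + b"
  shows "\<exists>c\<in>L. f c = a * c + b"
proof (cases "algebraic_over L w")
  case True
  then obtain m where "minimal_polynomial L w m"
    using algebraic_over_imp_minimal_polynomial[OF L] by blast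
  then show ?thesis using minimal_polynomial.solution_in_subfield f \<alpha>(1,3) ab y by blast
next
  case False
  then show ?thesis using solution_in_subfield_if_transcendental assms by blast
qed

theorem lemma4p7:
  fixes e :: "complex \<Rightarrow> 'a::field" and \<phi> \<sigma> :: "'a \<Rightarrow> 'a" and K L :: "'a set"
    and a b w \<alpha> :: 'a
  assumes emb: "complex_emb e"
    and setting: "setting_2S e \<phi> \<sigma> K \<or> setting_2Q e \<phi> \<sigma> K \<or> setting_2M e \<phi> \<sigma> K"
    and auts: "base_auts e \<phi> \<sigma> K"
    and a: "a \<in> K" "a \<noteq> 0" and b: "b \<in> K"
    and PV: "sigma_PV_field e \<phi> \<sigma> K (mat2 a b 0 1)"
    and L: "subfield L" "K \<subseteq> L" "\<phi> ` L \<subseteq> L"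
    and w: "w \<noteq> 0" "\<phi> w / w = \<alpha>" "\<alpha> \<in> L" "\<alpha> \<noteq> 0"
    and sol: "\<exists>y \<in> field_gen L {w}. \<phi> y = a * y + b"
  shows "\<exists>y \<in> L. \<phi> y = a * y + b"
proof -
  have "field_endo \<phi>" using PV unfolding sigma_PV_field_def by blast
  moreover have "\<phi> w = \<alpha> * w" using w(1,2) by (simp add: field_simps)
  moreover have "a \<in> L" "b \<in> L" using a(1) b L(2) by auto
  ultimately show ?thesis
    using sol solution_in_subfield_of_simple_extension L(1,3) w(3,4) by blast
qed

end
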